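(* Let $p\geq1$, $\mu>0$, and let $g:\mathbb{R}^n\to\mathbb{R}\cup\{+\infty\}$ be convex. Let $\lambda^{\ast}$ be the optimal solution of $$\min_{\lambda\in\mathbb{R}^n}\Big\{g(\lambda)+\frac{\mu}{1+\frac1p}\lVert\lambda\rVert^{1+\frac1p}\Big\},$$ and suppose $\lambda^{\ast}\neq0$. Let $\lambda^k\in\mathbb{R}^n$ with $\lVert\lambda^k\rVert>0$, set $t^k=\lVert\lambda^k\rVert^{\frac1p-1}$, and let $\lambda^{k+1}=\arg\min_{\lambda\in\mathbb{R}^n}\{g(\lambda)+\frac{\mu}{2}t^k\lVert\lambda\rVert^2\}$. Then $$(\lambda^{k+1}-\lambda^{\ast})^T\Big\{\lVert\lambda^k\rVert^{1-\frac1p}\lambda^{\ast}-\lVert\lambda^{\ast}\rVert^{1-\frac1p}\lambda^{k+1}\Big\}\geq0,$$ and $$\big(\lVert\lambda^k\rVert^{1-\frac1p}-\lVert\lambda^{\ast}\rVert^{1-\frac1p}\big)(\lambda^{k+1}-\lambda^{\ast})^T\lambda^{k+1}\geq\lVert\lambda^k\rVert^{1-\frac1p}\lVert\lambda^{k+1}-\lambda^{\ast}\rVert^2.$$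
   Context: $\lVert\cdot\rVert$ is the Euclidean norm. The minimizers above are assumed to exist. This is one step of the fixed point iteration: given $\lambda^k$, set $t^k=\lVert\lambda^k\rVert^{1/p-1}$ if $\lambda^k\neq0$ and $t^k=0$ otherwise, and $\lambda^{k+1}=\arg\min_\lambda\{g(\lambda)+\frac{\mu}{2}t^k\lVert\lambda\rVert^2\}$. *)

theory Defs
  imports "HOL-Analysis.Analysis" "HOL-Library.Extended_Real"
begin

text \<open>Convexity of an extended-real valued function g : R^n -> R \<union> {+\<infinity>}
  (values in ereal, never -\<infinity>), via the usual inequality with ereal arithmetic.\<close>
definition ext_convex :: "('a::real_vector \<Rightarrow> ereal) \<Rightarrow> bool" where
  "ext_convex g \<longleftrightarrow> (\<forall>x y. \<forall>t::real. 0 \<le> t \<and> t \<le> 1 \<longrightarrow>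
      g ((1 - t) *\<^sub>R x + t *\<^sub>R y) \<le> ereal (1 - t) * g x + ereal t * g y)"

end

theory Submission
  imports Defs
begin

text \<open>Both \<open>\<lambda>\<^sup>*\<close> and \<open>\<lambda>\<^sup>k\<^sup>+\<^sup>1\<close> minimise \<open>g\<close> plus a differentiable term \<open>h\<close>.
  Convexity of \<open>g\<close> along the segment from a minimiser \<open>x\<close> to \<open>y\<close>, followed by the limit
  of the difference quotient of \<open>h\<close>, gives the first-order condition
  \<open>g x \<le> g y + h'(y - x)\<close>. Adding the two instances cancels \<open>g\<close>; with the gradients
  \<open>\<mu> \<parallel>\<lambda>\<^sup>*\<parallel>\<^bsup>1/p-1\<^esup> \<lambda>\<^sup>*\<close> and \<open>\<mu> t\<^sup>k \<lambda>\<^sup>k\<^sup>+\<^sup>1\<close> this is the monotonicity inequality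
  \<open>t\<^sup>k (\<lambda>\<^sup>k\<^sup>+\<^sup>1 - \<lambda>\<^sup>*)\<cdot>\<lambda>\<^sup>k\<^sup>+\<^sup>1 \<le> \<parallel>\<lambda>\<^sup>*\<parallel>\<^bsup>1/p-1\<^esup> (\<lambda>\<^sup>k\<^sup>+\<^sup>1 - \<lambda>\<^sup>*)\<cdot>\<lambda>\<^sup>*\<close>,
  of which both claims are rearrangements.\<close>

lemma has_derivative_norm_powr:
  fixes a :: "'a::real_inner"
  assumes "a \<noteq> 0"
  shows "((\<lambda>z. norm z powr q) has_derivative (\<lambda>v. q * norm a powr (q - 2) * (v \<bullet> a))) (at a)"
proof -
  have "((\<lambda>z. norm z powr q) has_derivative
      (\<lambda>v. norm a powr q * ((v \<bullet> sgn a) * q / norm a))) (at a)"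
    using assms by (auto intro!: derivative_eq_intros has_derivative_norm)
  moreover have "norm a powr q * ((v \<bullet> sgn a) * q / norm a) = q * norm a powr (q - 2) * (v \<bullet> a)"
    for v using assms by (simp add: sgn_div_norm powr_diff power2_eq_square field_simps)
  ultimately show ?thesis by simp
qed

lemma has_field_derivative_ge_of_right_quotients:
  fixes \<phi> :: "real \<Rightarrow> real"
  assumes "(\<phi> has_field_derivative D) (at 0)" and "\<delta> > 0"
    and "\<And>t. 0 < t \<Longrightarrow> t < \<delta> \<Longrightarrow> c * t \<le> \<phi> t - \<phi> 0"
  shows "c \<le> D"
proof (rule tendsto_lowerbound)
  show "((\<lambda>t. (\<phi> t - \<phi> 0) / t) \<longlongrightarrow> D) (at_right 0)"
    using has_field_derivative_at_within[OF assms(1)] by (simp add: has_field_derivative_iff)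
  show "\<forall>\<^sub>F t in at_right 0. c \<le> (\<phi> t - \<phi> 0) / t"
    unfolding eventually_at_right_field
    using assms(2,3) by (intro exI[of _ \<delta>]) (simp add: pos_le_divide_eq)
qed simp

lemma has_field_derivative_along_line:
  assumes "(h has_derivative h') (at x)"
  shows "((\<lambda>t. h (x + t *\<^sub>R v)) has_field_derivative h' v) (at 0)"
proof -
  have "((\<lambda>t. h (x + t *\<^sub>R v)) has_derivative (\<lambda>s. h' (s *\<^sub>R v))) (at 0)"
    using assms
    by (auto intro!: derivative_eq_intros has_derivative_compose[of "\<lambda>t. x + t *\<^sub>R v" _ 0 UNIV h h'])
  moreover have "h' (s *\<^sub>R v) = s * h' v" for s
    using assms by (simp add: has_derivative_def linear_cmul bounded_linear.linear linear_scale)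
  ultimately show ?thesis
    by (simp add: has_field_derivative_def mult.commute[of _ "h' v"])
qed

lemma ext_convex_plus_differentiable_min_ineq:
  fixes g :: "'a::real_normed_vector \<Rightarrow> ereal"
  assumes conv: "ext_convex g" and not_minf: "\<And>z. g z \<noteq> -\<infinity>" and fin: "g x < \<infinity>"
    and min: "\<And>z. g x + ereal (h x) \<le> g z + ereal (h z)"
    and deriv: "(h has_derivative h') (at x)"
  shows "g x \<le> g y + ereal (h' (y - x))"
proof (cases "g y = \<infinity>")
  case False
  then obtain a b where ga: "g x = ereal a" and gb: "g y = ereal b"
    using fin not_minf by (cases "g x"; cases "g y") auto
  have "(a - b) * t \<le> h (x + t *\<^sub>R (y - x)) - h x" if t: "0 < t" "t < 1" for t
  proof -
    have seg: "(1 - t) *\<^sub>R x + t *\<^sub>R y = x + t *\<^sub>R (y - x)" by (simp add: algebra_simps)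
    have "ereal (a + h x) \<le> g (x + t *\<^sub>R (y - x)) + ereal (h (x + t *\<^sub>R (y - x)))"
      using min ga by simp
    also have "\<dots> \<le> ereal (1 - t) * g x + ereal t * g y + ereal (h (x + t *\<^sub>R (y - x)))"
      using conv t unfolding ext_convex_def seg[symmetric] by (intro add_right_mono) auto
    also have "\<dots> = ereal ((1 - t) * a + t * b + h (x + t *\<^sub>R (y - x)))"
      using ga gb by simp
    finally show ?thesis by (simp add: algebra_simps)
  qed
  hence "a - b \<le> h' (y - x)"
    by (intro has_field_derivative_ge_of_right_quotients
        [OF has_field_derivative_along_line[OF deriv], of 1]) auto
  thus ?thesis using ga gb by simp
qed simp

lemma ext_convex_minimizers_derivative_mono:
  fixes g :: "'a::real_normed_vector \<Rightarrow> ereal"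
  assumes conv: "ext_convex g" and not_minf: "\<And>z. g z \<noteq> -\<infinity>"
    and fin1: "g x\<^sub>1 < \<infinity>" and fin2: "g x\<^sub>2 < \<infinity>"
    and min1: "\<And>z. g x\<^sub>1 + ereal (h\<^sub>1 x\<^sub>1) \<le> g z + ereal (h\<^sub>1 z)"
    and min2: "\<And>z. g x\<^sub>2 + ereal (h\<^sub>2 x\<^sub>2) \<le> g z + ereal (h\<^sub>2 z)"
    and deriv1: "(h\<^sub>1 has_derivative D\<^sub>1) (at x\<^sub>1)"
    and deriv2: "(h\<^sub>2 has_derivative D\<^sub>2) (at x\<^sub>2)"
  shows "D\<^sub>2 (x\<^sub>2 - x\<^sub>1) \<le> D\<^sub>1 (x\<^sub>2 - x\<^sub>1)"
proof -
  obtain a b where ga: "g x\<^sub>1 = ereal a" and gb: "g x\<^sub>2 = ereal b"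
    using fin1 fin2 not_minf by (cases "g x\<^sub>1"; cases "g x\<^sub>2") auto
  have "a \<le> b + D\<^sub>1 (x\<^sub>2 - x\<^sub>1)"
    using ext_convex_plus_differentiable_min_ineq[OF conv not_minf fin1 min1 deriv1, of x\<^sub>2] ga gb
    by simp
  moreover have "b \<le> a + D\<^sub>2 (x\<^sub>1 - x\<^sub>2)"
    using ext_convex_plus_differentiable_min_ineq[OF conv not_minf fin2 min2 deriv2, of x\<^sub>1] ga gb
    by simp
  moreover have "D\<^sub>2 (x\<^sub>1 - x\<^sub>2) = - D\<^sub>2 (x\<^sub>2 - x\<^sub>1)"
    using has_derivative_linear[OF deriv2] by (metis linear_diff minus_diff_eq)
  ultimately show ?thesis by simp
qed

theorem lemma4p3:
  fixes g :: "real^'n \<Rightarrow> ereal" and p \<mu> :: real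
    and lam_star lam_k lam_k1 :: "real^'n"
  assumes hp: "p \<ge> 1" and hmu: "\<mu> > 0"
    and g_conv: "ext_convex g"
    and g_not_minf: "\<And>x. g x \<noteq> -\<infinity>"
    and star_fin: "g lam_star < \<infinity>"
    and star_opt: "\<And>lam. g lam_star + ereal (\<mu> / (1 + 1/p) * norm lam_star powr (1 + 1/p))
                     \<le> g lam + ereal (\<mu> / (1 + 1/p) * norm lam powr (1 + 1/p))"
    and star_nz: "lam_star \<noteq> 0"
    and k_pos: "norm lam_k > 0"
    and k1_fin: "g lam_k1 < \<infinity>"
    and k1_opt: "\<And>lam. g lam_k1 + ereal (\<mu> / 2 * (norm lam_k powr (1/p - 1)) * (norm lam_k1)\<^sup>2)
                     \<le> g lam + ereal (\<mu> / 2 * (norm lam_k powr (1/p - 1)) * (norm lam)\<^sup>2)"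
  shows "(lam_k1 - lam_star) \<bullet> (norm lam_k powr (1 - 1/p) *\<^sub>R lam_star
            - norm lam_star powr (1 - 1/p) *\<^sub>R lam_k1) \<ge> 0 \<and>
         (norm lam_k powr (1 - 1/p) - norm lam_star powr (1 - 1/p)) * ((lam_k1 - lam_star) \<bullet> lam_k1)
            \<ge> norm lam_k powr (1 - 1/p) * (norm (lam_k1 - lam_star))\<^sup>2"
proof -
  define K where "K = norm lam_k powr (1 - 1/p)"
  define A where "A = norm lam_star powr (1 - 1/p)"
  have K_pos: "K > 0" and A_pos: "A > 0" using k_pos star_nz by (simp_all add: K_def A_def)
  have inv_K: "norm lam_k powr (1/p - 1) = 1 / K"
    and inv_A: "norm lam_star powr (1/p - 1) = 1 / A"
    using powr_minus_divide[of _ "1 - 1/p"] by (simp_all add: K_def A_def)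
  have "((\<lambda>z. \<mu> / (1 + 1/p) * norm z powr (1 + 1/p)) has_derivative
      (\<lambda>v. \<mu> / (1 + 1/p) * ((1 + 1/p) * norm lam_star powr (1 + 1/p - 2) * (v \<bullet> lam_star))))
      (at lam_star)"
    by (intro has_derivative_mult_right has_derivative_norm_powr star_nz)
  then have "((\<lambda>z. \<mu> / (1 + 1/p) * norm z powr (1 + 1/p)) has_derivative
      (\<lambda>v. \<mu> / A * (v \<bullet> lam_star))) (at lam_star)"
    using hp by (simp add: inv_A add_nonneg_eq_0_iff)
  moreover have "((\<lambda>z. \<mu> / 2 * (norm lam_k powr (1/p - 1)) * (norm z)\<^sup>2) has_derivative
      (\<lambda>v. \<mu> / K * (v \<bullet> lam_k1))) (at lam_k1)"
    unfolding inv_K power2_norm_eq_inner using K_pos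
    by (auto intro!: derivative_eq_intros simp: inner_commute)
  ultimately have "\<mu> / K * ((lam_k1 - lam_star) \<bullet> lam_k1)
      \<le> \<mu> / A * ((lam_k1 - lam_star) \<bullet> lam_star)"
    by (rule ext_convex_minimizers_derivative_mono
        [OF g_conv g_not_minf star_fin k1_fin star_opt k1_opt])
  hence key: "A * ((lam_k1 - lam_star) \<bullet> lam_k1) \<le> K * ((lam_k1 - lam_star) \<bullet> lam_star)"
    using hmu K_pos A_pos by (simp add: field_simps)
  have "(norm (lam_k1 - lam_star))\<^sup>2
      = (lam_k1 - lam_star) \<bullet> lam_k1 - (lam_k1 - lam_star) \<bullet> lam_star"
    by (simp add: power2_norm_eq_inner inner_diff_right)
  with key show ?thesis
    unfolding K_def[symmetric] A_def[symmetric]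
    by (simp add: inner_diff_right left_diff_distrib right_diff_distrib)
qed

end
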